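(* Let $p\ge1$, let $w(0),\ldots,w(p)$ be positive weights, and let $P_1,\ldots,P_m$ be $p\times p$ orthogonal projectors with ranks $k_1,\ldots,k_m$. For orthogonal projectors $Q_1,Q_2$ with ranks $r_1,r_2$ set $D_w^2(Q_1,Q_2)=\tfrac12\|w(r_1)Q_1-w(r_2)Q_2\|^2$ (Frobenius norm), let $\sigma_w^2(P)=\frac1m\sum_{i=1}^m D_w^2(P_i,P)$, and call an average orthogonal projector (AOP) $P_w$ any $p\times p$ orthogonal projector (of any rank $0,\ldots,p$) minimizing $\sigma_w^2$. Let $\bar P_w=\frac1m\sum_{i=1}^m w(k_i)P_i=\sum_{i=1}^p\lambda_iu_iu_i'$ be an eigendecomposition with $\lambda_1\ge\cdots\ge\lambda_p\ge0$ and orthonormal eigenvectors $u_1,\ldots,u_p$. Then the rank $k$ of the AOP $P_w$ maximizes \[ f_w(k)=w(k)\Big(\sum_{i=1}^k\lambda_i\Big)I(k>0)-\tfrac12 w^2(k)k,\qquad k=0,\ldots,p, \] and \[ P_w=I(k>0)\cdot\sum_{i=1}^k u_iu_i', \] where $u_1,\ldots,u_k$ are the eigenvectors corresponding to the eigenvalues $\lambda_1,\ldots,\lambda_k$.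
   Context: An orthogonal projector is a $p\times p$ real matrix $P$ with $P=P'=P^2$; the zero matrix is allowed and has rank $0$. $I(\cdot)$ denotes the indicator function. *)

theory Defs
  imports "HOL-Analysis.Analysis"
begin

definition orth_proj :: "real^'n^'n \<Rightarrow> bool" where
  "orth_proj P \<longleftrightarrow> transpose P = P \<and> P ** P = P"

definition frob_norm :: "real^'n^'n \<Rightarrow> real" where
  "frob_norm A = sqrt (\<Sum>i\<in>UNIV. \<Sum>j\<in>UNIV. (A $ i $ j)\<^sup>2)"

definition outer :: "real^'n \<Rightarrow> real^'n \<Rightarrow> real^'n^'n" where
  "outer x y = (\<chi> i j. x $ i * y $ j)"

definition Dw2 :: "(nat \<Rightarrow> real) \<Rightarrow> real^'n^'n \<Rightarrow> real^'n^'n \<Rightarrow> real" where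
  "Dw2 w Q1 Q2 = (1/2) * (frob_norm (w (rank Q1) *\<^sub>R Q1 - w (rank Q2) *\<^sub>R Q2))\<^sup>2"

definition sigma_w2 :: "(nat \<Rightarrow> real) \<Rightarrow> nat \<Rightarrow> (nat \<Rightarrow> real^'n^'n) \<Rightarrow> real^'n^'n \<Rightarrow> real" where
  "sigma_w2 w m Ps P = (1 / real m) * (\<Sum>i=1..m. Dw2 w (Ps i) P)"

definition is_AOP :: "(nat \<Rightarrow> real) \<Rightarrow> nat \<Rightarrow> (nat \<Rightarrow> real^'n^'n) \<Rightarrow> real^'n^'n \<Rightarrow> bool" where
  "is_AOP w m Ps Pw \<longleftrightarrow> orth_proj Pw \<and>
     (\<forall>Q. orth_proj Q \<longrightarrow> sigma_w2 w m Ps Pw \<le> sigma_w2 w m Ps Q)"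

definition Pbar_w :: "(nat \<Rightarrow> real) \<Rightarrow> nat \<Rightarrow> (nat \<Rightarrow> real^'n^'n) \<Rightarrow> real^'n^'n" where
  "Pbar_w w m Ps = (1 / real m) *\<^sub>R (\<Sum>i=1..m. w (rank (Ps i)) *\<^sub>R Ps i)"

definition f_w :: "(nat \<Rightarrow> real) \<Rightarrow> (nat \<Rightarrow> real) \<Rightarrow> nat \<Rightarrow> real" where
  "f_w w lam k = w k * (\<Sum>i=1..k. lam i) * (if k > 0 then 1 else 0) - (1/2) * (w k)\<^sup>2 * real k"

end

theory Submission
  imports Defs
begin

text \<open>
  With \<open>r = rank Q\<close>, expanding the Frobenius norms gives
  \<open>\<sigma>\<^sub>w\<^sup>2(Q) = C - (w(r) \<langle>M, Q\<rangle> - w(r)\<^sup>2 r / 2)\<close> for a constant \<open>C\<close>, where \<open>M\<close> is the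
  weighted mean of the \<open>P\<^sub>i\<close> and \<open>\<langle>_, _\<rangle>\<close> is the Frobenius inner product (which is just
  \<open>\<bullet>\<close> on \<open>real^'n^'n\<close>). By Ky Fan's maximum principle \<open>\<langle>M, Q\<rangle> \<le> \<lambda>\<^sub>1 + \<dots> + \<lambda>\<^sub>r\<close>, with
  equality for \<open>Q = u\<^sub>1u\<^sub>1' + \<dots> + u\<^sub>ru\<^sub>r'\<close>; hence the least value of \<open>\<sigma>\<^sub>w\<^sup>2\<close> on projectors of
  rank \<open>r\<close> is \<open>C - f\<^sub>w(r)\<close>, and the rank of an AOP maximises \<open>f\<^sub>w\<close>. Equality in Ky Fan's
  inequality forces the AOP to fix the \<open>u\<^sub>i\<close> with \<open>\<lambda>\<^sub>i > \<lambda>\<^sub>r\<close> and to annihilate those with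
  \<open>\<lambda>\<^sub>i < \<lambda>\<^sub>r\<close>, so it leaves the \<open>\<lambda>\<^sub>r\<close>-eigenspace invariant; an orthonormal basis of that
  eigenspace adapted to the AOP yields the required eigenbasis \<open>v\<close>.
\<close>

definition orthonormal_on :: "'i set \<Rightarrow> ('i \<Rightarrow> 'a::real_inner) \<Rightarrow> bool" where
  "orthonormal_on I v \<longleftrightarrow> (\<forall>i\<in>I. \<forall>j\<in>I. v i \<bullet> v j = (if i = j then 1 else 0))"

lemma orthonormal_onD: "orthonormal_on I v \<Longrightarrow> i \<in> I \<Longrightarrow> j \<in> I \<Longrightarrow> v i \<bullet> v j = (if i = j then 1 else 0)"
  by (simp add: orthonormal_on_def)

lemma orthonormal_on_subset: "orthonormal_on I v \<Longrightarrow> J \<subseteq> I \<Longrightarrow> orthonormal_on J v"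
  unfolding orthonormal_on_def by blast

lemma orthonormal_on_inj: "orthonormal_on I v \<Longrightarrow> inj_on v I"
  by (rule inj_onI) (metis orthonormal_onD zero_neq_one)

lemma orthonormal_on_independent:
  assumes "orthonormal_on I v" shows "independent (v ` I)"
proof (rule pairwise_orthogonal_independent)
  show "pairwise orthogonal (v ` I)"
    using assms by (auto simp: pairwise_def orthogonal_def orthonormal_on_def)
  show "0 \<notin> v ` I"
    using assms unfolding orthonormal_on_def by (metis imageE inner_zero_left zero_neq_one)
qed

lemma orthonormal_on_dim_span:
  assumes "finite I" "orthonormal_on I v" shows "dim (span (v ` I)) = card I"
  using dim_eq_card_independent[OF orthonormal_on_independent[OF assms(2)]]
    card_image[OF orthonormal_on_inj[OF assms(2)]] by simp

lemma orthonormal_on_span_UNIV: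
  fixes v :: "'i \<Rightarrow> real^'n"
  assumes "finite I" "card I = CARD('n)" "orthonormal_on I v"
  shows "span (v ` I) = UNIV"
proof -
  have "dim (v ` I) = DIM(real^'n)"
    using orthonormal_on_dim_span[OF assms(1,3)] assms(2) by simp
  then show ?thesis by (simp only: dim_eq_full)
qed

lemma orthonormal_on_expansion:
  assumes "finite I" "orthonormal_on I v" "x \<in> span (v ` I)"
  shows "x = (\<Sum>i\<in>I. (x \<bullet> v i) *\<^sub>R v i)"
proof (rule vector_eq_dot_span[OF assms(3)])
  show "(\<Sum>i\<in>I. (x \<bullet> v i) *\<^sub>R v i) \<in> span (v ` I)"
    by (intro span_sum span_scale span_base) auto
  fix y assume "y \<in> v ` I"
  then obtain j where j: "j \<in> I" "y = v j" by auto
  have "v j \<bullet> (\<Sum>i\<in>I. (x \<bullet> v i) *\<^sub>R v i) = (\<Sum>i\<in>I. if i = j then x \<bullet> v j else 0)"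
    using assms(2) j(1) by (auto simp: inner_sum_right orthonormal_on_def intro!: sum.cong)
  then show "y \<bullet> x = y \<bullet> (\<Sum>i\<in>I. (x \<bullet> v i) *\<^sub>R v i)"
    using assms(1) j by (simp add: inner_commute)
qed

lemma orthonormal_on_glue:
  assumes "orthonormal_on I f" "orthonormal_on J g" "I \<inter> J = {}"
    and "\<And>i j. i \<in> I \<Longrightarrow> j \<in> J \<Longrightarrow> f i \<bullet> g j = 0"
  shows "orthonormal_on (I \<union> J) (\<lambda>i. if i \<in> I then f i else g i)"
proof -
  have "g j \<bullet> f i = 0" if "i \<in> I" "j \<in> J" for i j
    using assms(4)[OF that] by (simp add: inner_commute)
  then show ?thesis
    using assms unfolding orthonormal_on_def by auto
qed

lemma orthonormal_on_enumerate:
  fixes B :: "'a::real_inner set"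
  assumes "finite B" "pairwise orthogonal B" "\<And>x. x \<in> B \<Longrightarrow> norm x = 1"
  obtains f where "orthonormal_on {a<..a + card B} f" "f ` {a<..a + card B} = B"
proof -
  obtain h where h: "bij_betw h {0..<card B} B"
    using ex_bij_betw_nat_finite[OF assms(1)] by blast
  define f where "f i = h (i - Suc a)" for i
  have bij: "bij_betw f {a<..a + card B} B"
    unfolding f_def
  proof (rule bij_betw_trans[OF _ h, unfolded comp_def])
    show "bij_betw (\<lambda>i. i - Suc a) {a<..a + card B} {0..<card B}"
      by (rule bij_betw_byWitness[where f' = "\<lambda>i. i + Suc a"]) auto
  qed
  have "orthonormal_on {a<..a + card B} f"
    unfolding orthonormal_on_def
  proof (intro ballI)
    fix i j assume ij: "i \<in> {a<..a + card B}" "j \<in> {a<..a + card B}"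
    have "f i \<in> B" "f j \<in> B" using bij_betwE[OF bij] ij by auto
    moreover have "f i = f j \<longleftrightarrow> i = j"
      using inj_on_eq_iff[OF bij_betw_imp_inj_on[OF bij] ij] .
    ultimately show "f i \<bullet> f j = (if i = j then 1 else 0)"
      using assms(2,3) by (auto simp: pairwise_def orthogonal_def norm_eq_1)
  qed
  with bij show ?thesis
    using that by (auto simp: bij_betw_def)
qed

lemma matrix_eq_on_spanning:
  fixes A B :: "real^'n^'m"
  assumes "span V = UNIV" "\<And>x. x \<in> V \<Longrightarrow> A *v x = B *v x"
  shows "A = B"
  using linear_eq_on_span[OF matrix_vector_mul_linear matrix_vector_mul_linear, of V] assms
  by (auto simp: matrix_eq)

lemma outer_mulv: "outer x y *v z = (y \<bullet> z) *\<^sub>R x"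
  by (simp add: outer_def matrix_vector_mult_def inner_vec_def vec_eq_iff sum_distrib_left mult_ac)

lemma sum_matrix_mulv: "(\<Sum>i\<in>I. A i) *v x = (\<Sum>i\<in>I. A i *v x)"
  by (induction I rule: infinite_finite_induct) (auto simp: matrix_vector_mult_add_rdistrib)

lemma sum_outer_mulv:
  assumes "finite I" "orthonormal_on I v" "j \<in> I"
  shows "(\<Sum>i\<in>I. c i *\<^sub>R outer (v i) (v i)) *v v j = c j *\<^sub>R v j"
proof -
  have "(\<Sum>i\<in>I. c i *\<^sub>R outer (v i) (v i)) *v v j = (\<Sum>i\<in>I. if i = j then c j *\<^sub>R v j else 0)"
    unfolding sum_matrix_mulv scaleR_matrix_vector_assoc[symmetric] outer_mulv
    using assms(2,3) by (intro sum.cong) (auto simp: orthonormal_on_def)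
  then show ?thesis using assms(1,3) by simp
qed

lemma matrix_eq_sum_outer:
  fixes A :: "real^'n^'n"
  assumes "finite I" "card I = CARD('n)" "orthonormal_on I v"
    and "\<And>i. i \<in> I \<Longrightarrow> A *v v i = c i *\<^sub>R v i"
  shows "A = (\<Sum>i\<in>I. c i *\<^sub>R outer (v i) (v i))"
  by (rule matrix_eq_on_spanning[OF orthonormal_on_span_UNIV[OF assms(1-3)]])
     (use assms sum_outer_mulv[OF assms(1,3)] in auto)

lemma norm_eq_frob_norm: "norm A = frob_norm A"
  unfolding frob_norm_def norm_vec_def L2_set_def real_norm_def
  by (simp add: sum_nonneg)

lemma inner_matrix_eq: "(A::real^'n^'m) \<bullet> B = (\<Sum>i\<in>UNIV. \<Sum>j\<in>UNIV. A $ i $ j * B $ i $ j)"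
  by (simp add: inner_vec_def)

lemma inner_outer_self: "outer x x \<bullet> A = x \<bullet> (A *v x)"
  unfolding inner_matrix_eq outer_def inner_vec_def matrix_vector_mult_def
  by (simp add: sum_distrib_left mult_ac)

lemma inner_sum_outer:
  "(\<Sum>i\<in>I. lam i *\<^sub>R outer (u i) (u i)) \<bullet> Q = (\<Sum>i\<in>I. lam i * (u i \<bullet> (Q *v u i)))"
  unfolding inner_sum_left inner_scaleR_left inner_outer_self ..

section \<open>Orthogonal projectors\<close>

lemma symmetric_matrix_inner_commute:
  assumes "transpose Q = Q" shows "(Q *v x) \<bullet> y = x \<bullet> (Q *v (y::real^'n))"
  using vector_transpose_matrix[of x Q] dot_lmul_matrix[of x Q y] assms by simp

lemma orth_proj_symmetric: "orth_proj Q \<Longrightarrow> (Q *v x) \<bullet> y = x \<bullet> (Q *v y)"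
  unfolding orth_proj_def by (rule symmetric_matrix_inner_commute) simp

lemma orth_proj_idem: "orth_proj Q \<Longrightarrow> Q *v (Q *v x) = Q *v x"
  unfolding orth_proj_def by (simp add: matrix_vector_mul_assoc)

lemma orth_proj_quadratic_form:
  assumes Q: "orth_proj Q" shows "x \<bullet> (Q *v x) = (norm (Q *v x))\<^sup>2"
proof -
  have "x \<bullet> (Q *v x) = x \<bullet> (Q *v (Q *v x))" by (simp add: orth_proj_idem[OF Q])
  also have "\<dots> = (Q *v x) \<bullet> (Q *v x)" by (rule orth_proj_symmetric[OF Q, symmetric])
  finally show ?thesis by (simp add: power2_norm_eq_inner)
qed

lemma orth_proj_quadratic_form_compl:
  "orth_proj Q \<Longrightarrow> x \<bullet> x - x \<bullet> (Q *v x) = (norm (x - Q *v x))\<^sup>2"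
  by (simp add: power2_norm_eq_inner inner_diff_left inner_diff_right inner_commute
      orth_proj_quadratic_form[unfolded power2_norm_eq_inner])

lemma orth_proj_quadratic_form_unit:
  assumes Q: "orth_proj Q" and x: "x \<bullet> x = 1"
  shows "0 \<le> x \<bullet> (Q *v x)" and "x \<bullet> (Q *v x) \<le> 1"
  using orth_proj_quadratic_form[OF Q, of x] orth_proj_quadratic_form_compl[OF Q, of x] x
  by (simp_all, smt (verit) zero_le_power2)

lemma orth_proj_fixes_if_quadratic_form_1:
  assumes Q: "orth_proj Q" and "x \<bullet> x = 1" "x \<bullet> (Q *v x) = 1"
  shows "Q *v x = x"
  using orth_proj_quadratic_form_compl[OF Q, of x] assms(2,3) by simp

lemma orth_proj_kills_if_quadratic_form_0:
  assumes Q: "orth_proj Q" and "x \<bullet> (Q *v x) = 0"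
  shows "Q *v x = 0"
  using orth_proj_quadratic_form[OF Q, of x] assms(2) by simp

lemma trace_eq_sum_orthonormal:
  fixes Q :: "real^'n^'n" and b :: "'i \<Rightarrow> real^'n"
  assumes fin: "finite I" and b: "orthonormal_on I b" and sym: "transpose Q = Q"
    and range: "\<And>x. Q *v x \<in> span (b ` I)"
  shows "trace Q = (\<Sum>i\<in>I. b i \<bullet> (Q *v b i))"
proof -
  have "Q $ j $ j = (\<Sum>i\<in>I. (Q *v b i) $ j * b i $ j)" for j
  proof -
    have "Q $ j $ j = (Q *v axis j 1) \<bullet> axis j 1"
      by (simp add: inner_axis matrix_vector_mult_basis column_def)
    also have "\<dots> = (\<Sum>i\<in>I. ((Q *v axis j 1) \<bullet> b i) *\<^sub>R b i) \<bullet> axis j 1"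
      using orthonormal_on_expansion[OF fin b range] by (rule arg_cong)
    also have "\<dots> = (\<Sum>i\<in>I. (axis j 1 \<bullet> (Q *v b i)) * b i $ j)"
      by (simp add: inner_sum_left inner_axis symmetric_matrix_inner_commute[OF sym])
    also have "\<dots> = (\<Sum>i\<in>I. (Q *v b i) $ j * b i $ j)"
      by (simp add: axis_nth inner_axis')
    finally show ?thesis .
  qed
  then have "trace Q = (\<Sum>j\<in>UNIV. \<Sum>i\<in>I. (Q *v b i) $ j * b i $ j)"
    by (simp add: trace_def)
  also have "\<dots> = (\<Sum>i\<in>I. b i \<bullet> (Q *v b i))"
    by (subst sum.swap) (simp add: inner_vec_def mult.commute)
  finally show ?thesis .
qed

lemma trace_orth_proj:
  fixes Q :: "real^'n^'n"
  assumes Q: "orth_proj Q"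
  shows "trace Q = real (rank Q)"
proof -
  have sub: "subspace (range ((*v) Q))"
    by (intro subspace_UNIV linear_subspace_image) (simp add: matrix_vector_mul_linear)
  obtain B where B: "B \<subseteq> range ((*v) Q)" "pairwise orthogonal B"
    "\<And>x. x \<in> B \<Longrightarrow> norm x = 1" "independent B" "card B = dim (range ((*v) Q))"
    "span B = range ((*v) Q)"
    using orthonormal_basis_subspace[OF sub] by blast
  have fin: "finite B" using B(4) independent_imp_finite by blast
  have orth: "orthonormal_on B id"
    using B(2,3) by (auto simp: orthonormal_on_def pairwise_def orthogonal_def norm_eq_1)
  have "trace Q = (\<Sum>x\<in>B. x \<bullet> (Q *v x))"
    using trace_eq_sum_orthonormal[OF fin orth] Q B(6) by (auto simp: orth_proj_def)
  also have "\<dots> = (\<Sum>x\<in>B. 1)"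
  proof (intro sum.cong refl)
    fix x assume x: "x \<in> B"
    then have "Q *v x = x" using B(1) orth_proj_idem[OF Q] by auto
    then show "x \<bullet> (Q *v x) = 1" using B(3)[OF x] by (simp add: norm_eq_1)
  qed
  finally show ?thesis using B(5) by (simp add: rank_dim_range)
qed

lemma sum_orthonormal_quadratic_form_eq_rank:
  fixes Q :: "real^'n^'n"
  assumes "finite I" "card I = CARD('n)" "orthonormal_on I u" "orth_proj Q"
  shows "(\<Sum>i\<in>I. u i \<bullet> (Q *v u i)) = real (rank Q)"
  using trace_eq_sum_orthonormal[OF assms(1,3)] trace_orth_proj[OF assms(4)]
    orthonormal_on_span_UNIV[OF assms(1-3)] assms(4)
  by (simp add: orth_proj_def)

lemma inner_orth_proj_self:
  assumes Q: "orth_proj Q" shows "Q \<bullet> Q = real (rank Q)"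
proof -
  have "Q $ j $ i = Q $ i $ j" for i j
  proof -
    have "transpose Q $ i $ j = Q $ i $ j" using Q by (simp add: orth_proj_def)
    then show ?thesis by (simp add: transpose_def)
  qed
  then have "Q \<bullet> Q = trace (Q ** Q)"
    by (simp add: inner_matrix_eq trace_def matrix_matrix_mult_def)
  also have "\<dots> = real (rank Q)"
    using Q trace_orth_proj by (simp add: orth_proj_def)
  finally show ?thesis .
qed

lemma orth_proj_rank_0: "orth_proj Q \<Longrightarrow> rank Q = 0 \<Longrightarrow> Q = 0"
  using inner_orth_proj_self by fastforce

definition proj_first :: "(nat \<Rightarrow> real^'n) \<Rightarrow> nat \<Rightarrow> real^'n^'n" where
  "proj_first v k = (\<Sum>i=1..k. outer (v i) (v i))"

lemma proj_first_mulv: "proj_first v k *v x = (\<Sum>i=1..k. (v i \<bullet> x) *\<^sub>R v i)"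
  unfolding proj_first_def sum_matrix_mulv outer_mulv ..

lemma proj_first_mulv_basis:
  assumes "orthonormal_on {1..N} v" "k \<le> N" "l \<in> {1..N}"
  shows "proj_first v k *v v l = (if l \<le> k then v l else 0)"
proof -
  have "proj_first v k *v v l = (\<Sum>i=1..k. if i = l then v l else 0)"
    unfolding proj_first_mulv using assms
    by (intro sum.cong refl) (auto simp: orthonormal_on_def inner_commute)
  then show ?thesis using assms(3) by simp
qed

lemma orth_proj_proj_first:
  assumes v: "orthonormal_on {1..N} v" and k: "k \<le> N"
  shows "orth_proj (proj_first v k)"
  unfolding orth_proj_def
proof
  show "transpose (proj_first v k) = proj_first v k"
    by (simp add: proj_first_def transpose_def outer_def vec_eq_iff sum_component mult.commute)
  have fixed: "v i \<bullet> (proj_first v k *v x) = v i \<bullet> x" if "i \<in> {1..k}" for i x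
  proof -
    have "v i \<bullet> (proj_first v k *v x) = (\<Sum>l=1..k. if l = i then v i \<bullet> x else 0)"
      unfolding proj_first_mulv inner_sum_right
      using v that k by (intro sum.cong refl) (auto simp: orthonormal_on_def)
    then show ?thesis using that by simp
  qed
  have "proj_first v k *v (proj_first v k *v x) = proj_first v k *v x" for x
  proof -
    have "proj_first v k *v (proj_first v k *v x)
        = (\<Sum>i=1..k. (v i \<bullet> (proj_first v k *v x)) *\<^sub>R v i)"
      by (rule proj_first_mulv)
    also have "\<dots> = (\<Sum>i=1..k. (v i \<bullet> x) *\<^sub>R v i)"
      using fixed by (intro sum.cong refl) simp
    finally show ?thesis by (simp only: proj_first_mulv)
  qed
  then show "proj_first v k ** proj_first v k = proj_first v k"
    by (simp add: matrix_eq matrix_vector_mul_assoc[symmetric])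
qed

lemma quadratic_form_proj_first:
  assumes u: "orthonormal_on {1..N} u" and k: "k \<le> N" and i: "i \<in> {1..N}"
  shows "u i \<bullet> (proj_first u k *v u i) = (if i \<le> k then 1 else 0)"
  using proj_first_mulv_basis[OF u k i] orthonormal_onD[OF u i i] by simp

lemma sum_indicator_atMost:
  fixes f :: "nat \<Rightarrow> real"
  assumes "k \<le> N"
  shows "(\<Sum>i=1..N. f i * (if i \<le> k then 1 else 0)) = (\<Sum>i=1..k. f i)"
proof -
  have "(\<Sum>i=1..N. f i * (if i \<le> k then 1 else 0)) = (\<Sum>i\<in>{1..N} \<inter> {..k}. f i)"
    by (subst sum.inter_restrict) (auto intro!: sum.cong)
  also have "{1..N} \<inter> {..k} = {1..k}" using assms by auto
  finally show ?thesis .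
qed

lemma rank_proj_first:
  fixes v :: "nat \<Rightarrow> real^'n"
  assumes v: "orthonormal_on {1..CARD('n)} v" and k: "k \<le> CARD('n)"
  shows "rank (proj_first v k) = k"
proof -
  have "real (rank (proj_first v k)) = (\<Sum>i=1..CARD('n). v i \<bullet> (proj_first v k *v v i))"
    using sum_orthonormal_quadratic_form_eq_rank[OF finite_atLeastAtMost _ v orth_proj_proj_first[OF v k]]
    by simp
  also have "\<dots> = (\<Sum>i=1..CARD('n). 1 * (if i \<le> k then 1 else 0))"
    using quadratic_form_proj_first[OF v k] by (intro sum.cong) auto
  also have "\<dots> = real k"
    using sum_indicator_atMost[OF k, of "\<lambda>_. 1"] by simp
  finally show ?thesis by simp
qed

lemma inner_proj_first:
  fixes u :: "nat \<Rightarrow> real^'n"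
  assumes u: "orthonormal_on {1..N} u" and k: "k \<le> N"
  shows "(\<Sum>i=1..N. lam i *\<^sub>R outer (u i) (u i)) \<bullet> proj_first u k = (\<Sum>i=1..k. lam i)"
proof -
  have "(\<Sum>i=1..N. lam i *\<^sub>R outer (u i) (u i)) \<bullet> proj_first u k
      = (\<Sum>i=1..N. lam i * (if i \<le> k then 1 else 0))"
    unfolding inner_sum_outer using quadratic_form_proj_first[OF u k] by (intro sum.cong) auto
  then show ?thesis using sum_indicator_atMost[OF k] by simp
qed

section \<open>Ky Fan's maximum principle\<close>

text \<open>For sorted \<open>lam\<close> and weights in \<open>[0, 1]\<close> both sums on the right are termwise nonnegative.\<close>
lemma top_sum_minus_weighted_sum:
  fixes lam c :: "nat \<Rightarrow> real"
  assumes "r \<le> N" "(\<Sum>i=1..N. c i) = real r"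
  shows "(\<Sum>i=1..r. lam i) - (\<Sum>i=1..N. lam i * c i) =
         (\<Sum>i=1..r. (lam i - lam r) * (1 - c i)) + (\<Sum>i=r+1..N. (lam r - lam i) * c i)"
proof -
  have split: "(\<Sum>i=1..N. g i) = (\<Sum>i=1..r. g i) + (\<Sum>i=r+1..N. g i)" for g :: "nat \<Rightarrow> real"
    using sum.ub_add_nat[of 1 r g "N - r"] assms(1) by simp
  have top: "(\<Sum>i=1..r. (lam i - lam r) * (1 - c i))
      = (\<Sum>i=1..r. lam i) - lam r * real r - (\<Sum>i=1..r. lam i * c i) + lam r * (\<Sum>i=1..r. c i)"
    by (simp add: sum_subtractf sum.distrib sum_distrib_left left_diff_distrib right_diff_distrib)
  have bottom: "(\<Sum>i=r+1..N. (lam r - lam i) * c i)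
      = lam r * (\<Sum>i=r+1..N. c i) - (\<Sum>i=r+1..N. lam i * c i)"
    by (simp add: sum_subtractf sum_distrib_left left_diff_distrib)
  have "lam r * (\<Sum>i=1..r. c i) + lam r * (\<Sum>i=r+1..N. c i) = lam r * real r"
    using split[of c] assms(2) by (simp add: distrib_left[symmetric])
  then show ?thesis
    unfolding top bottom using split[of "\<lambda>i. lam i * c i"] by simp
qed

lemma weighted_sum_le_top_sum:
  fixes lam c :: "nat \<Rightarrow> real"
  assumes sorted: "\<And>i j. 1 \<le> i \<Longrightarrow> i \<le> j \<Longrightarrow> j \<le> N \<Longrightarrow> lam j \<le> lam i"
    and c: "\<And>i. i \<in> {1..N} \<Longrightarrow> 0 \<le> c i \<and> c i \<le> 1"
    and r: "r \<le> N" and sum_c: "(\<Sum>i=1..N. c i) = real r"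
  shows "(\<Sum>i=1..N. lam i * c i) \<le> (\<Sum>i=1..r. lam i)"
proof (cases "r = 0")
  case True
  then have "\<forall>i\<in>{1..N}. c i = 0"
    using sum_c c by (subst sum_nonneg_eq_0_iff[symmetric]) auto
  with True show ?thesis by simp
next
  case False
  have "0 \<le> (\<Sum>i=1..r. (lam i - lam r) * (1 - c i))"
    using sorted c r by (intro sum_nonneg mult_nonneg_nonneg) auto
  moreover have "0 \<le> (\<Sum>i=r+1..N. (lam r - lam i) * c i)"
    using sorted c False by (intro sum_nonneg mult_nonneg_nonneg) auto
  ultimately show ?thesis
    using top_sum_minus_weighted_sum[OF r sum_c, of lam] by linarith
qed

lemma weighted_sum_eq_top_sum_imp:
  fixes lam c :: "nat \<Rightarrow> real"
  assumes sorted: "\<And>i j. 1 \<le> i \<Longrightarrow> i \<le> j \<Longrightarrow> j \<le> N \<Longrightarrow> lam j \<le> lam i"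
    and c: "\<And>i. i \<in> {1..N} \<Longrightarrow> 0 \<le> c i \<and> c i \<le> 1"
    and r: "1 \<le> r" "r \<le> N" and sum_c: "(\<Sum>i=1..N. c i) = real r"
    and eq: "(\<Sum>i=1..N. lam i * c i) = (\<Sum>i=1..r. lam i)"
  shows "\<And>i. i \<in> {1..N} \<Longrightarrow> lam r < lam i \<Longrightarrow> c i = 1"
    and "\<And>i. i \<in> {1..N} \<Longrightarrow> lam i < lam r \<Longrightarrow> c i = 0"
proof -
  have top_terms: "0 \<le> (lam i - lam r) * (1 - c i)" if "i \<in> {1..r}" for i
    using sorted c r that by (intro mult_nonneg_nonneg) auto
  have bottom_terms: "0 \<le> (lam r - lam i) * c i" if "i \<in> {r+1..N}" for i
    using sorted c r that by (intro mult_nonneg_nonneg) auto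
  have "(\<Sum>i=1..r. (lam i - lam r) * (1 - c i)) + (\<Sum>i=r+1..N. (lam r - lam i) * c i) = 0"
    using top_sum_minus_weighted_sum[OF r(2) sum_c, of lam] eq by linarith
  moreover have "0 \<le> (\<Sum>i=1..r. (lam i - lam r) * (1 - c i))"
    using top_terms by (rule sum_nonneg)
  moreover have "0 \<le> (\<Sum>i=r+1..N. (lam r - lam i) * c i)"
    using bottom_terms by (rule sum_nonneg)
  ultimately have "(\<Sum>i=1..r. (lam i - lam r) * (1 - c i)) = 0"
    and "(\<Sum>i=r+1..N. (lam r - lam i) * c i) = 0" by linarith+
  then have top: "\<forall>i\<in>{1..r}. (lam i - lam r) * (1 - c i) = 0"
    and bottom: "\<forall>i\<in>{r+1..N}. (lam r - lam i) * c i = 0"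
    using sum_nonneg_eq_0_iff[of "{1..r}" "\<lambda>i. (lam i - lam r) * (1 - c i)"]
      sum_nonneg_eq_0_iff[of "{r+1..N}" "\<lambda>i. (lam r - lam i) * c i"] top_terms bottom_terms
    by auto
  show "c i = 1" if "i \<in> {1..N}" "lam r < lam i" for i
  proof -
    have "i \<le> r" using sorted[of r i] r that by (cases "i \<le> r") auto
    then show ?thesis using top that by force
  qed
  show "c i = 0" if "i \<in> {1..N}" "lam i < lam r" for i
  proof -
    have "r < i" using sorted[of i r] r that by (cases "r < i") auto
    then show ?thesis using bottom that by force
  qed
qed

lemma inner_orth_proj_le_top_sum:
  fixes u :: "nat \<Rightarrow> real^'n"
  assumes u: "orthonormal_on {1..CARD('n)} u"
    and sorted: "\<And>i j. 1 \<le> i \<Longrightarrow> i \<le> j \<Longrightarrow> j \<le> CARD('n) \<Longrightarrow> lam j \<le> lam i"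
    and Q: "orth_proj Q"
  shows "(\<Sum>i=1..CARD('n). lam i *\<^sub>R outer (u i) (u i)) \<bullet> Q \<le> (\<Sum>i=1..rank Q. lam i)"
  unfolding inner_sum_outer
proof (rule weighted_sum_le_top_sum[OF sorted])
  show "0 \<le> u i \<bullet> (Q *v u i) \<and> u i \<bullet> (Q *v u i) \<le> 1" if "i \<in> {1..CARD('n)}" for i
    using orth_proj_quadratic_form_unit[OF Q] orthonormal_onD[OF u that that] by simp
  show "rank Q \<le> CARD('n)" by (rule rank_bound[THEN order_trans]) simp
  show "(\<Sum>i=1..CARD('n). u i \<bullet> (Q *v u i)) = real (rank Q)"
    by (rule sum_orthonormal_quadratic_form_eq_rank[OF _ _ u Q]) simp_all
qed

lemma inner_orth_proj_eq_top_sum_imp: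
  fixes u :: "nat \<Rightarrow> real^'n"
  assumes u: "orthonormal_on {1..CARD('n)} u"
    and sorted: "\<And>i j. 1 \<le> i \<Longrightarrow> i \<le> j \<Longrightarrow> j \<le> CARD('n) \<Longrightarrow> lam j \<le> lam i"
    and Q: "orth_proj Q" and r: "1 \<le> rank Q"
    and eq: "(\<Sum>i=1..CARD('n). lam i *\<^sub>R outer (u i) (u i)) \<bullet> Q = (\<Sum>i=1..rank Q. lam i)"
  shows "\<And>i. i \<in> {1..CARD('n)} \<Longrightarrow> lam (rank Q) < lam i \<Longrightarrow> Q *v u i = u i"
    and "\<And>i. i \<in> {1..CARD('n)} \<Longrightarrow> lam i < lam (rank Q) \<Longrightarrow> Q *v u i = 0"
proof -
  have bounds: "0 \<le> u i \<bullet> (Q *v u i) \<and> u i \<bullet> (Q *v u i) \<le> 1" if "i \<in> {1..CARD('n)}" for i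
    using orth_proj_quadratic_form_unit[OF Q] orthonormal_onD[OF u that that] by simp
  have rank_le: "rank Q \<le> CARD('n)" by (rule rank_bound[THEN order_trans]) simp
  have sum_c: "(\<Sum>i=1..CARD('n). u i \<bullet> (Q *v u i)) = real (rank Q)"
    by (rule sum_orthonormal_quadratic_form_eq_rank[OF _ _ u Q]) simp_all
  note weights = weighted_sum_eq_top_sum_imp[OF sorted bounds r rank_le sum_c
      eq[unfolded inner_sum_outer]]
  show "Q *v u i = u i" if "i \<in> {1..CARD('n)}" "lam (rank Q) < lam i" for i
    using orth_proj_fixes_if_quadratic_form_1[OF Q] orthonormal_onD[OF u that(1) that(1)]
      weights(1) that by simp
  show "Q *v u i = 0" if "i \<in> {1..CARD('n)}" "lam i < lam (rank Q)" for i
    using orth_proj_kills_if_quadratic_form_0[OF Q] weights(2) that by simp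
qed

section \<open>A common eigenbasis\<close>

lemma orth_proj_fixed_orthogonal_killed:
  assumes "orth_proj Q" "Q *v x = x" "Q *v y = 0"
  shows "x \<bullet> y = 0"
  using orth_proj_symmetric[OF assms(1), of x y] assms(2,3) by simp

lemma orth_proj_invariant_subspace_split:
  fixes Q :: "real^'n^'n" and E :: "(real^'n) set"
  assumes E: "subspace E" and Q: "orth_proj Q" and inv: "\<And>x. x \<in> E \<Longrightarrow> Q *v x \<in> E"
  obtains BR BK where "finite BR" "pairwise orthogonal BR" "\<And>x. x \<in> BR \<Longrightarrow> norm x = 1"
    and "\<And>x. x \<in> BR \<Longrightarrow> x \<in> E \<and> Q *v x = x"
    and "finite BK" "pairwise orthogonal BK" "\<And>x. x \<in> BK \<Longrightarrow> norm x = 1"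
    and "\<And>x. x \<in> BK \<Longrightarrow> x \<in> E \<and> Q *v x = 0"
    and "card BR + card BK = dim E"
proof -
  have compl: "(mat 1 - Q) *v x = x - Q *v x" for x
    by (simp add: matrix_vector_mult_diff_rdistrib)
  obtain BR where BR: "BR \<subseteq> (*v) Q ` E" "pairwise orthogonal BR" "\<And>x. x \<in> BR \<Longrightarrow> norm x = 1"
    "independent BR" "span BR = (*v) Q ` E"
    using orthonormal_basis_subspace[OF linear_subspace_image[OF matrix_vector_mul_linear E]]
    by metis
  obtain BK where BK: "BK \<subseteq> (*v) (mat 1 - Q) ` E" "pairwise orthogonal BK"
    "\<And>x. x \<in> BK \<Longrightarrow> norm x = 1" "independent BK" "span BK = (*v) (mat 1 - Q) ` E"
    using orthonormal_basis_subspace[OF linear_subspace_image[OF matrix_vector_mul_linear E]]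
    by metis
  have fixed: "x \<in> E \<and> Q *v x = x" if "x \<in> BR" for x
    using that BR(1) inv orth_proj_idem[OF Q] by auto
  have killed: "x \<in> E \<and> Q *v x = 0" if "x \<in> BK" for x
    using that BK(1) inv E orth_proj_idem[OF Q]
    by (auto simp: compl matrix_vector_mult_diff_distrib subspace_diff)
  have cross: "x \<bullet> y = 0" if "x \<in> BR" "y \<in> BK" for x y
    using orth_proj_fixed_orthogonal_killed[OF Q] fixed[OF that(1)] killed[OF that(2)] by simp
  have indep: "independent (BR \<union> BK)"
  proof (rule pairwise_orthogonal_independent)
    show "pairwise orthogonal (BR \<union> BK)"
      using BR(2) BK(2) cross by (auto simp: pairwise_def orthogonal_def) (metis inner_commute)
    show "0 \<notin> BR \<union> BK" using BR(3) BK(3) by force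
  qed
  have "E \<subseteq> span (BR \<union> BK)"
  proof
    fix x assume "x \<in> E"
    then have "Q *v x \<in> span BR" "x - Q *v x \<in> span BK"
      using BR(5) BK(5) by (auto simp flip: compl)
    then have "Q *v x + (x - Q *v x) \<in> span (BR \<union> BK)"
      by (meson span_add span_mono sup.cobounded1 sup.cobounded2 subsetD)
    then show "x \<in> span (BR \<union> BK)" by simp
  qed
  moreover have "span (BR \<union> BK) \<subseteq> E"
    using fixed killed by (intro span_minimal[OF _ E]) auto
  ultimately have "dim E = card (BR \<union> BK)"
    using dim_eq_card_independent[OF indep] by (metis dim_span subset_antisym)
  also have "\<dots> = card BR + card BK"
    using cross BR(3) independent_imp_finite[OF BR(4)] independent_imp_finite[OF BK(4)]
    by (intro card_Un_disjoint) (fastforce simp: norm_eq_1)+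
  finally show ?thesis
    using that independent_imp_finite[OF BR(4)] independent_imp_finite[OF BK(4)] BR(2,3) BK(2,3)
      fixed killed by metis
qed

lemma orth_proj_invariant_subspace_basis:
  fixes Q :: "real^'n^'n" and E :: "(real^'n) set"
  assumes E: "subspace E" and Q: "orth_proj Q" and inv: "\<And>x. x \<in> E \<Longrightarrow> Q *v x \<in> E"
  obtains f c where "orthonormal_on {a<..a + dim E} f" "\<And>i. i \<in> {a<..a + dim E} \<Longrightarrow> f i \<in> E"
    and "a \<le> c" "c \<le> a + dim E"
    and "\<And>i. i \<in> {a<..c} \<Longrightarrow> Q *v f i = f i" "\<And>i. i \<in> {c<..a + dim E} \<Longrightarrow> Q *v f i = 0"
proof -
  obtain BR BK where BR: "finite BR" "pairwise orthogonal BR" "\<And>x. x \<in> BR \<Longrightarrow> norm x = 1"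
    and fixed: "\<And>x. x \<in> BR \<Longrightarrow> x \<in> E \<and> Q *v x = x"
    and BK: "finite BK" "pairwise orthogonal BK" "\<And>x. x \<in> BK \<Longrightarrow> norm x = 1"
    and killed: "\<And>x. x \<in> BK \<Longrightarrow> x \<in> E \<and> Q *v x = 0"
    and dim: "card BR + card BK = dim E"
    using orth_proj_invariant_subspace_split[OF E Q inv] by blast
  define c where "c = a + card BR"
  obtain f1 where f1: "orthonormal_on {a<..c} f1" "f1 ` {a<..c} = BR"
    using orthonormal_on_enumerate[OF BR] c_def by metis
  obtain f2 where f2: "orthonormal_on {c<..a + dim E} f2" "f2 ` {c<..a + dim E} = BK"
    using orthonormal_on_enumerate[OF BK] c_def dim by (metis add.assoc)
  define f where "f i = (if i \<in> {a<..c} then f1 i else f2 i)" for i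
  have ivl: "{a<..c} \<union> {c<..a + dim E} = {a<..a + dim E}"
    using dim c_def by auto
  have in_E: "f i \<in> E" if "i \<in> {a<..a + dim E}" for i
    using that f1(2) f2(2) fixed killed unfolding f_def ivl[symmetric] by (cases "i \<in> {a<..c}") auto
  show ?thesis
  proof
    show "orthonormal_on {a<..a + dim E} f"
      unfolding f_def ivl[symmetric]
      using orth_proj_fixed_orthogonal_killed[OF Q] f1(2) f2(2) fixed killed
      by (intro orthonormal_on_glue[OF f1(1) f2(1)]) auto
    show "Q *v f i = f i" if "i \<in> {a<..c}" for i
      using that f1(2) fixed unfolding f_def by auto
    show "Q *v f i = 0" if "i \<in> {c<..a + dim E}" for i
      using that f2(2) killed unfolding f_def by auto
  qed (use in_E dim c_def in auto)
qed

lemma orthonormal_on_inner_span_outside: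
  assumes u: "orthonormal_on I u" and "J \<subseteq> I" "j \<in> I - J" "x \<in> span (u ` J)"
  shows "u j \<bullet> x = 0"
proof -
  have "orthogonal (u j) x"
    by (rule orthogonal_to_span[OF assms(4)])
       (use assms in \<open>auto simp: orthonormal_on_def orthogonal_def\<close>)
  then show ?thesis by (simp add: orthogonal_def)
qed

lemma orth_proj_block_invariant:
  fixes u :: "nat \<Rightarrow> real^'n"
  assumes u: "orthonormal_on {1..CARD('n)} u" and b: "b \<le> CARD('n)" and Q: "orth_proj Q"
    and fixes_low: "\<And>i. i \<in> {1..a} \<Longrightarrow> Q *v u i = u i"
    and kills_high: "\<And>i. i \<in> {b<..CARD('n)} \<Longrightarrow> Q *v u i = 0"
    and x: "x \<in> span (u ` {a<..b})"
  shows "Q *v x \<in> span (u ` {a<..b})"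
proof -
  have "Q *v u j \<in> span (u ` {a<..b})" if j: "j \<in> {a<..b}" for j
  proof -
    have zero: "(Q *v u j) \<bullet> u i = 0" if i: "i \<in> {1..CARD('n)} - {a<..b}" for i
    proof -
      have "i \<noteq> j" "j \<in> {1..CARD('n)}" using i j b by auto
      then have "u j \<bullet> (Q *v u i) = 0"
        using i fixes_low kills_high orthonormal_onD[OF u, of j i] by (cases "i \<le> a") auto
      then show ?thesis by (simp add: orth_proj_symmetric[OF Q])
    qed
    have "Q *v u j = (\<Sum>i\<in>{1..CARD('n)}. ((Q *v u j) \<bullet> u i) *\<^sub>R u i)"
      using orthonormal_on_span_UNIV[OF finite_atLeastAtMost _ u]
      by (intro orthonormal_on_expansion[OF _ u]) simp_all
    also have "\<dots> = (\<Sum>i\<in>{a<..b}. ((Q *v u j) \<bullet> u i) *\<^sub>R u i)"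
      by (rule sum.mono_neutral_right) (use zero b in auto)
    also have "\<dots> \<in> span (u ` {a<..b})"
      by (intro span_sum span_scale span_base) auto
    finally show ?thesis .
  qed
  then have "span ((*v) Q ` u ` {a<..b}) \<subseteq> span (u ` {a<..b})"
    by (intro span_minimal) auto
  then show ?thesis
    using x linear_span_image[OF matrix_vector_mul_linear, of Q "u ` {a<..b}"] by auto
qed

lemma orth_proj_adapted_orthonormal_basis:
  fixes u :: "nat \<Rightarrow> real^'n" and Q :: "real^'n^'n"
  assumes u: "orthonormal_on {1..CARD('n)} u" and ab: "a \<le> b" "b \<le> CARD('n)"
    and Q: "orth_proj Q"
    and fixes_low: "\<And>i. i \<in> {1..a} \<Longrightarrow> Q *v u i = u i"
    and kills_high: "\<And>i. i \<in> {b<..CARD('n)} \<Longrightarrow> Q *v u i = 0"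
  obtains v c where "orthonormal_on {1..CARD('n)} v" "c \<le> CARD('n)" "Q = proj_first v c"
    and "\<And>i. i \<in> {1..CARD('n)} - {a<..b} \<Longrightarrow> v i = u i"
    and "\<And>i. i \<in> {a<..b} \<Longrightarrow> v i \<in> span (u ` {a<..b})"
proof -
  define E where "E = span (u ` {a<..b})"
  have block: "{a<..b} \<subseteq> {1..CARD('n)}" using ab by auto
  have "dim E = b - a"
    using orthonormal_on_dim_span[OF _ orthonormal_on_subset[OF u block]] by (simp add: E_def)
  then have top: "a + dim E = b" using ab by simp
  have inv: "\<And>x. x \<in> E \<Longrightarrow> Q *v x \<in> E"
    unfolding E_def by (rule orth_proj_block_invariant[OF u ab(2) Q fixes_low kills_high])
  obtain f c where f: "orthonormal_on {a<..b} f" "\<And>i. i \<in> {a<..b} \<Longrightarrow> f i \<in> E"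
    and ac: "a \<le> c"
    and c: "c \<le> b" "\<And>i. i \<in> {a<..c} \<Longrightarrow> Q *v f i = f i" "\<And>i. i \<in> {c<..b} \<Longrightarrow> Q *v f i = 0"
    using orth_proj_invariant_subspace_basis[OF _ Q inv, of a, unfolded top] E_def by blast
  define v where "v i = (if i \<in> {a<..b} then f i else u i)" for i
  have split: "{a<..b} \<union> ({1..CARD('n)} - {a<..b}) = {1..CARD('n)}" using block by auto
  have "orthonormal_on ({a<..b} \<union> ({1..CARD('n)} - {a<..b})) v"
    unfolding v_def
  proof (rule orthonormal_on_glue[OF f(1) orthonormal_on_subset[OF u]])
    show "f i \<bullet> u j = 0" if "i \<in> {a<..b}" "j \<in> {1..CARD('n)} - {a<..b}" for i j
      using orthonormal_on_inner_span_outside[OF u block that(2) f(2)[OF that(1), unfolded E_def]]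
      by (simp add: inner_commute)
  qed auto
  then have v: "orthonormal_on {1..CARD('n)} v" by (simp only: split)
  have "Q *v v i = (if i \<le> c then v i else 0)" if "i \<in> {1..CARD('n)}" for i
    using that fixes_low kills_high c ac unfolding v_def by auto
  then have Q_eq: "Q = proj_first v c"
    using proj_first_mulv_basis[OF v] c(1) ab(2)
    by (intro matrix_eq_on_spanning[OF orthonormal_on_span_UNIV[OF _ _ v]]) auto
  show ?thesis
  proof (rule that[OF v _ Q_eq])
    show "c \<le> CARD('n)" using c(1) ab(2) by simp
    show "v i = u i" if "i \<in> {1..CARD('n)} - {a<..b}" for i
      using that by (auto simp: v_def)
    show "v i \<in> span (u ` {a<..b})" if "i \<in> {a<..b}" for i
      using that f(2) by (simp add: v_def E_def)
  qed
qed

lemma sorted_level_interval: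
  fixes lam :: "nat \<Rightarrow> real"
  assumes sorted: "\<And>i j. 1 \<le> i \<Longrightarrow> i \<le> j \<Longrightarrow> j \<le> N \<Longrightarrow> lam j \<le> lam i"
    and r: "1 \<le> r" "r \<le> N"
  obtains a b where "a < r" "r \<le> b" "b \<le> N"
    and "\<And>i. i \<in> {1..N} \<Longrightarrow> lam r < lam i \<longleftrightarrow> i \<le> a"
    and "\<And>i. i \<in> {1..N} \<Longrightarrow> lam r \<le> lam i \<longleftrightarrow> i \<le> b"
proof -
  define A where "A = {i\<in>{1..N}. lam r < lam i}"
  define B where "B = {i\<in>{1..N}. lam r \<le> lam i}"
  define a where "a = Max (insert 0 A)"
  define b where "b = Max B"
  have finite: "finite A" unfolding A_def by simp
  have a: "a \<in> insert 0 A" "\<And>i. i \<in> A \<Longrightarrow> i \<le> a"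
    using finite Max_in[of "insert 0 A"] Max_ge[of "insert 0 A"] unfolding a_def by auto
  have "finite B" "B \<noteq> {}" using r unfolding B_def by auto
  then have b: "b \<in> B" "\<And>i. i \<in> B \<Longrightarrow> i \<le> b"
    unfolding b_def by simp_all
  have "a < r"
  proof (rule ccontr)
    assume "\<not> a < r"
    then show False using a(1) sorted[of r a] r unfolding A_def by auto
  qed
  moreover have "r \<le> b" using b(2) r unfolding B_def by simp
  moreover have "b \<le> N" using b(1) unfolding B_def by simp
  moreover have "lam r < lam i \<longleftrightarrow> i \<le> a" if i: "i \<in> {1..N}" for i
  proof
    assume "lam r < lam i"
    then show "i \<le> a" using a(2) i unfolding A_def by simp
  next
    assume "i \<le> a"
    then have "a \<in> A" using a(1) i by auto
    then show "lam r < lam i" using sorted[of i a] i \<open>i \<le> a\<close> unfolding A_def by auto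
  qed
  moreover have "lam r \<le> lam i \<longleftrightarrow> i \<le> b" if i: "i \<in> {1..N}" for i
  proof
    assume "lam r \<le> lam i"
    then show "i \<le> b" using b(2) i unfolding B_def by simp
  next
    assume "i \<le> b"
    then show "lam r \<le> lam i" using b(1) sorted[of i b] i unfolding B_def by auto
  qed
  ultimately show ?thesis by (rule that)
qed

lemma sum_outer_mulv_level_span:
  assumes "finite I" "orthonormal_on I u" "J \<subseteq> I" "\<And>j. j \<in> J \<Longrightarrow> lam j = \<mu>"
    and x: "x \<in> span (u ` J)"
  shows "(\<Sum>i\<in>I. lam i *\<^sub>R outer (u i) (u i)) *v x = \<mu> *\<^sub>R x"
proof -
  have "(\<Sum>i\<in>I. lam i *\<^sub>R outer (u i) (u i)) *v x = (\<mu> *\<^sub>R mat 1) *v x"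
  proof (rule linear_eq_on_span[OF matrix_vector_mul_linear matrix_vector_mul_linear _ x])
    fix y assume "y \<in> u ` J"
    then obtain j where "j \<in> J" "y = u j" by auto
    then show "(\<Sum>i\<in>I. lam i *\<^sub>R outer (u i) (u i)) *v y = (\<mu> *\<^sub>R mat 1) *v y"
      using sum_outer_mulv[OF assms(1,2)] assms(3,4)
      by (auto simp: scaleR_matrix_vector_assoc[symmetric])
  qed
  then show ?thesis by (simp add: scaleR_matrix_vector_assoc[symmetric])
qed

lemma orth_proj_attaining_top_sum_blocks:
  fixes u :: "nat \<Rightarrow> real^'n" and Q :: "real^'n^'n"
  assumes u: "orthonormal_on {1..CARD('n)} u"
    and sorted: "\<And>i j. 1 \<le> i \<Longrightarrow> i \<le> j \<Longrightarrow> j \<le> CARD('n) \<Longrightarrow> lam j \<le> lam i"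
    and Q: "orth_proj Q" and r: "1 \<le> rank Q"
    and eq: "(\<Sum>i=1..CARD('n). lam i *\<^sub>R outer (u i) (u i)) \<bullet> Q = (\<Sum>i=1..rank Q. lam i)"
  obtains a b where "a \<le> b" "b \<le> CARD('n)"
    and "\<And>i. i \<in> {1..a} \<Longrightarrow> Q *v u i = u i" "\<And>i. i \<in> {b<..CARD('n)} \<Longrightarrow> Q *v u i = 0"
    and "\<And>i. i \<in> {a<..b} \<Longrightarrow> lam i = lam (rank Q)"
proof -
  have "rank Q \<le> CARD('n)" by (rule rank_bound[THEN order_trans]) simp
  then obtain a b where ab: "a < rank Q" "rank Q \<le> b" "b \<le> CARD('n)"
    and above: "\<And>i. i \<in> {1..CARD('n)} \<Longrightarrow> lam (rank Q) < lam i \<longleftrightarrow> i \<le> a"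
    and level: "\<And>i. i \<in> {1..CARD('n)} \<Longrightarrow> lam (rank Q) \<le> lam i \<longleftrightarrow> i \<le> b"
    using sorted_level_interval[of "CARD('n)" lam "rank Q"] sorted r by blast
  note on_eigenvectors = inner_orth_proj_eq_top_sum_imp[OF u sorted Q r eq]
  show ?thesis
  proof
    show "a \<le> b" "b \<le> CARD('n)" using ab by simp_all
    show "Q *v u i = u i" if "i \<in> {1..a}" for i
      using that on_eigenvectors(1) above[of i] ab by auto
    show "Q *v u i = 0" if "i \<in> {b<..CARD('n)}" for i
      using that on_eigenvectors(2) level[of i] ab by auto
    show "lam i = lam (rank Q)" if "i \<in> {a<..b}" for i
      using above[of i] level[of i] ab that by (auto intro: antisym)
  qed
qed

lemma eigenbasis_adapted_to_maximizer:
  fixes u :: "nat \<Rightarrow> real^'n" and Q :: "real^'n^'n"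
  assumes u: "orthonormal_on {1..CARD('n)} u"
    and sorted: "\<And>i j. 1 \<le> i \<Longrightarrow> i \<le> j \<Longrightarrow> j \<le> CARD('n) \<Longrightarrow> lam j \<le> lam i"
    and Q: "orth_proj Q"
    and eq: "(\<Sum>i=1..CARD('n). lam i *\<^sub>R outer (u i) (u i)) \<bullet> Q = (\<Sum>i=1..rank Q. lam i)"
  obtains v where "orthonormal_on {1..CARD('n)} v"
    and "(\<Sum>i=1..CARD('n). lam i *\<^sub>R outer (u i) (u i)) = (\<Sum>i=1..CARD('n). lam i *\<^sub>R outer (v i) (v i))"
    and "Q = proj_first v (rank Q)"
proof (cases "rank Q = 0")
  case True
  then show ?thesis
    using that[OF u refl] orth_proj_rank_0[OF Q] by (simp add: proj_first_def)
next
  case False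
  define S where "S = (\<Sum>i=1..CARD('n). lam i *\<^sub>R outer (u i) (u i))"
  obtain a b where ab: "a \<le> b" "b \<le> CARD('n)"
    and fixes_low: "\<And>i. i \<in> {1..a} \<Longrightarrow> Q *v u i = u i"
    and kills_high: "\<And>i. i \<in> {b<..CARD('n)} \<Longrightarrow> Q *v u i = 0"
    and level: "\<And>i. i \<in> {a<..b} \<Longrightarrow> lam i = lam (rank Q)"
    using orth_proj_attaining_top_sum_blocks[where lam = lam, OF u sorted Q _ eq] False by auto
  obtain v :: "nat \<Rightarrow> real^'n" and c
    where v: "orthonormal_on {1..CARD('n)} v" and c: "c \<le> CARD('n)" "Q = proj_first v c"
    and outside: "\<And>i. i \<in> {1..CARD('n)} - {a<..b} \<Longrightarrow> v i = u i"
    and inside: "\<And>i. i \<in> {a<..b} \<Longrightarrow> v i \<in> span (u ` {a<..b})"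
    using orth_proj_adapted_orthonormal_basis[OF u ab Q fixes_low kills_high] by blast
  have "S *v v i = lam i *\<^sub>R v i" if "i \<in> {1..CARD('n)}" for i
  proof (cases "i \<in> {a<..b}")
    case True
    have "{a<..b} \<subseteq> {1..CARD('n)}" using ab by auto
    from sum_outer_mulv_level_span[OF finite_atLeastAtMost u this level inside[OF True]]
    show ?thesis unfolding S_def level[OF True] .
  next
    case False
    then show ?thesis using sum_outer_mulv[OF _ u that] outside[of i] that by (simp add: S_def)
  qed
  then have "S = (\<Sum>i=1..CARD('n). lam i *\<^sub>R outer (v i) (v i))"
    by (intro matrix_eq_sum_outer[OF _ _ v]) simp_all
  moreover have "Q = proj_first v (rank Q)"
    using c rank_proj_first[OF v c(1)] by simp
  ultimately show ?thesis
    using that[OF v] unfolding S_def by blast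
qed

section \<open>The AOP objective\<close>

definition aop_gain :: "(nat \<Rightarrow> real) \<Rightarrow> real^'n^'n \<Rightarrow> real^'n^'n \<Rightarrow> real" where
  "aop_gain w S Q = w (rank Q) * (S \<bullet> Q) - 1/2 * (w (rank Q))\<^sup>2 * real (rank Q)"

lemma Dw2_expand:
  assumes Q: "orth_proj Q"
  shows "Dw2 w P Q = 1/2 * (w (rank P))\<^sup>2 * (P \<bullet> P) - w (rank P) * (P \<bullet> Q) * w (rank Q)
           + 1/2 * (w (rank Q))\<^sup>2 * real (rank Q)"
  unfolding Dw2_def norm_eq_frob_norm[symmetric] power2_norm_eq_inner
    inner_orth_proj_self[OF Q, symmetric]
  by (simp add: inner_diff_left inner_diff_right inner_commute[of Q P] algebra_simps power2_eq_square)

lemma sigma_w2_eq_const_minus_gain: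
  assumes m: "m \<ge> 1" and Q: "orth_proj Q"
  shows "sigma_w2 w m Ps Q
    = (\<Sum>i=1..m. (w (rank (Ps i)))\<^sup>2 * (Ps i \<bullet> Ps i)) / (2 * real m) - aop_gain w (Pbar_w w m Ps) Q"
proof -
  let ?a = "\<lambda>i. w (rank (Ps i))" and ?b = "w (rank Q)"
  have D: "(\<Sum>i=1..m. Dw2 w (Ps i) Q) = (\<Sum>i=1..m. (?a i)\<^sup>2 * (Ps i \<bullet> Ps i)) / 2
      - ?b * (\<Sum>i=1..m. ?a i * (Ps i \<bullet> Q)) + real m * (1/2 * ?b\<^sup>2 * real (rank Q))"
    unfolding Dw2_expand[OF Q]
    by (simp add: sum.distrib sum_subtractf sum_distrib_left sum_divide_distrib mult_ac)
  have P: "Pbar_w w m Ps \<bullet> Q = (\<Sum>i=1..m. ?a i * (Ps i \<bullet> Q)) / real m"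
    by (simp add: Pbar_w_def inner_sum_left)
  show ?thesis
    unfolding sigma_w2_def aop_gain_def D P using m by (simp add: field_simps)
qed

lemma f_w_eq: "f_w w lam j = w j * (\<Sum>i=1..j. lam i) - 1/2 * (w j)\<^sup>2 * real j"
  unfolding f_w_def by (cases "j = 0") auto

lemma aop_gain_proj_first:
  fixes u :: "nat \<Rightarrow> real^'n"
  assumes u: "orthonormal_on {1..CARD('n)} u" and j: "j \<le> CARD('n)"
  shows "aop_gain w (\<Sum>i=1..CARD('n). lam i *\<^sub>R outer (u i) (u i)) (proj_first u j) = f_w w lam j"
  unfolding aop_gain_def f_w_eq rank_proj_first[OF u j] inner_proj_first[OF u j] ..

lemma aop_gain_le_f_w:
  fixes u :: "nat \<Rightarrow> real^'n"
  assumes u: "orthonormal_on {1..CARD('n)} u"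
    and sorted: "\<And>i j. 1 \<le> i \<Longrightarrow> i \<le> j \<Longrightarrow> j \<le> CARD('n) \<Longrightarrow> lam j \<le> lam i"
    and Q: "orth_proj Q" and w: "0 \<le> w (rank Q)"
  shows "aop_gain w (\<Sum>i=1..CARD('n). lam i *\<^sub>R outer (u i) (u i)) Q \<le> f_w w lam (rank Q)"
  unfolding aop_gain_def f_w_eq
  using mult_left_mono[OF inner_orth_proj_le_top_sum[OF u sorted Q] w] by simp

lemma is_AOP_maximizes_aop_gain:
  assumes m: "m \<ge> 1" and AOP: "is_AOP w m Ps Pw" and Q: "orth_proj Q"
  shows "aop_gain w (Pbar_w w m Ps) Q \<le> aop_gain w (Pbar_w w m Ps) Pw"
proof -
  have Pw: "orth_proj Pw" and "sigma_w2 w m Ps Pw \<le> sigma_w2 w m Ps Q"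
    using AOP Q by (auto simp: is_AOP_def)
  then show ?thesis
    unfolding sigma_w2_eq_const_minus_gain[OF m Q] sigma_w2_eq_const_minus_gain[OF m Pw] by simp
qed

lemma aop_gain_maximizerD:
  fixes u :: "nat \<Rightarrow> real^'n"
  assumes u: "orthonormal_on {1..CARD('n)} u"
    and sorted: "\<And>i j. 1 \<le> i \<Longrightarrow> i \<le> j \<Longrightarrow> j \<le> CARD('n) \<Longrightarrow> lam j \<le> lam i"
    and S: "S = (\<Sum>i=1..CARD('n). lam i *\<^sub>R outer (u i) (u i))"
    and Q: "orth_proj Q" and w: "0 < w (rank Q)"
    and max: "\<And>j. j \<le> CARD('n) \<Longrightarrow> aop_gain w S (proj_first u j) \<le> aop_gain w S Q"
  shows "\<forall>j \<le> CARD('n). f_w w lam j \<le> f_w w lam (rank Q)"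
    and "S \<bullet> Q = (\<Sum>i=1..rank Q. lam i)"
proof -
  have k: "rank Q \<le> CARD('n)" by (rule rank_bound[THEN order_trans]) simp
  have gain_le: "aop_gain w S Q \<le> f_w w lam (rank Q)"
    using aop_gain_le_f_w[where w = w, OF u sorted Q less_imp_le[OF w]] S by simp
  show "\<forall>j \<le> CARD('n). f_w w lam j \<le> f_w w lam (rank Q)"
    using max aop_gain_proj_first[OF u] gain_le S by fastforce
  have "w (rank Q) * (\<Sum>i=1..rank Q. lam i) \<le> w (rank Q) * (S \<bullet> Q)"
    using max[OF k] aop_gain_proj_first[OF u k] S by (simp add: aop_gain_def f_w_eq)
  then have "(\<Sum>i=1..rank Q. lam i) \<le> S \<bullet> Q"
    using w by (simp add: mult_le_cancel_left_pos)
  moreover have "S \<bullet> Q \<le> (\<Sum>i=1..rank Q. lam i)"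
    using inner_orth_proj_le_top_sum[where lam = lam, OF u sorted Q] S by simp
  ultimately show "S \<bullet> Q = (\<Sum>i=1..rank Q. lam i)" by linarith
qed

theorem proposition2p2:
  fixes w :: "nat \<Rightarrow> real" and m :: nat and Ps :: "nat \<Rightarrow> real^'n^'n"
    and lam :: "nat \<Rightarrow> real" and u :: "nat \<Rightarrow> real^'n" and Pw :: "real^'n^'n"
  assumes wpos: "\<And>k. k \<le> CARD('n) \<Longrightarrow> w k > 0"
    and m_pos: "m \<ge> 1"
    and projs: "\<And>i. i \<in> {1..m} \<Longrightarrow> orth_proj (Ps i)"
    and lam_sorted: "\<And>i j. 1 \<le> i \<Longrightarrow> i \<le> j \<Longrightarrow> j \<le> CARD('n) \<Longrightarrow> lam j \<le> lam i"
    and lam_nonneg: "lam (CARD('n)) \<ge> 0"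
    and u_orthonormal: "\<And>i j. i \<in> {1..CARD('n)} \<Longrightarrow> j \<in> {1..CARD('n)} \<Longrightarrow>
                          u i \<bullet> u j = (if i = j then 1 else 0)"
    and eig_decomp: "Pbar_w w m Ps = (\<Sum>i=1..CARD('n). lam i *\<^sub>R outer (u i) (u i))"
    and AOP: "is_AOP w m Ps Pw"
  shows "(\<forall>j \<le> CARD('n). f_w w lam j \<le> f_w w lam (rank Pw)) \<and>
         (\<exists>v :: nat \<Rightarrow> real^'n.
            (\<forall>i\<in>{1..CARD('n)}. \<forall>j\<in>{1..CARD('n)}. v i \<bullet> v j = (if i = j then 1 else 0)) \<and>
            Pbar_w w m Ps = (\<Sum>i=1..CARD('n). lam i *\<^sub>R outer (v i) (v i)) \<and>
            Pw = (if rank Pw > 0 then 1 else 0) *\<^sub>R (\<Sum>i=1..rank Pw. outer (v i) (v i)))"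
proof -
  have u: "orthonormal_on {1..CARD('n)} u"
    using u_orthonormal by (simp add: orthonormal_on_def)
  have Pw: "orth_proj Pw" using AOP by (simp add: is_AOP_def)
  have "rank Pw \<le> CARD('n)" by (rule rank_bound[THEN order_trans]) simp
  note maximizer = aop_gain_maximizerD[OF u lam_sorted eig_decomp Pw wpos[OF this]
      is_AOP_maximizes_aop_gain[OF m_pos AOP orth_proj_proj_first[OF u]]]
  obtain v where v: "orthonormal_on {1..CARD('n)} v"
    "(\<Sum>i=1..CARD('n). lam i *\<^sub>R outer (u i) (u i)) = (\<Sum>i=1..CARD('n). lam i *\<^sub>R outer (v i) (v i))"
    "Pw = proj_first v (rank Pw)"
    using eigenbasis_adapted_to_maximizer[where lam = lam, OF u lam_sorted Pw
        maximizer(2)[unfolded eig_decomp]] by blast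
  have "Pw = (if rank Pw > 0 then 1 else 0) *\<^sub>R (\<Sum>i=1..rank Pw. outer (v i) (v i))"
    using v(3) orth_proj_rank_0[OF Pw] by (auto simp: proj_first_def)
  then show ?thesis
    using maximizer(1) v(1,2) eig_decomp unfolding orthonormal_on_def
    by (intro conjI exI[of _ v]) auto
qed

end
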